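(* Assume $\mathfrak p<\mathfrak t$ and let $\lambda=\mathfrak p$. Assume: (i) $\mathcal B=\{B_\alpha:\alpha<\lambda\}$ exemplifies $\mathfrak p$; (ii) $\kappa<\lambda$ is a regular cardinal and $\bar A=\langle A_i:i<\kappa\rangle\subseteq[\omega]^{\aleph_0}$ is $\subseteq^*$-decreasing such that $A_i\cap B$ is infinite for all $i<\kappa$, $B\in\mathcal B$, and every pseudo-intersection $A$ of $\{A_i:i<\kappa\}$ has finite intersection with some $B\in\mathcal B$; (iii) $\mathrm{pr}:\lambda\times\lambda\to\lambda$ is a bijection with $\mathrm{pr}(\alpha_1,\alpha_2)\ge\alpha_1,\alpha_2$. Then there is a sequence $\langle\bar\eta^\alpha:\alpha\le\lambda\rangle$ such that: (a) $\bar\eta^\alpha\in\mathbf S_{\bar A}$ for $\alpha<\lambda$, and $\bar\eta^\lambda\in\mathbf S$; (b) $\langle\bar\eta^\alpha:\alpha\le\lambda\rangle$ is $\le^*$-increasing; (c) for each $\alpha<\lambda$, for all sufficiently large $n\in\mathrm{dom}(\bar\eta^{\alpha+1})$ we have $\mathrm{set}(\eta^{\alpha+1}_n)\cap B_\alpha\neq\emptyset$; (d)+(e) if $\alpha=\mathrm{pr}(\beta,\gamma)$, then for every choice of $X\in\{B_\beta\}\cup\{A_\beta:\beta<\kappa\}$ and $Y\in\{B_\gamma\}\cup\{A_\gamma:\gamma<\kappa\}$ (i.e. $X=B_\beta$, or $X=A_\beta$ when $\beta<\kappa$; likewise for $Y$), for every $n\in\mathrm{dom}(\bar\eta^{\alpha+1})$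 we have $\mathrm{set}(\eta^{\alpha+1}_n)\cap X\neq\emptyset$ and $\mathrm{set}(\eta^{\alpha+1}_n)\cap Y\neq\emptyset$, and the truth value of $\min(\mathrm{set}(\eta^{\alpha+1}_n)\cap X)<\min(\mathrm{set}(\eta^{\alpha+1}_n)\cap Y)$ is the same for all $n\in\mathrm{dom}(\bar\eta^{\alpha+1})$.
   Context: $[\omega]^{\aleph_0}$ is the set of infinite subsets of $\omega$; $A\subseteq^*B$ means $A\setminus B$ is finite; $A$ is a pseudo-intersection of $\mathcal C$ if $A\in[\omega]^{\aleph_0}$ and $A\subseteq^*C$ for all $C\in\mathcal C$. $\mathfrak p$ is the least cardinality of a family $\mathcal B\subseteq[\omega]^{\aleph_0}$ all of whose finite subfamilies have infinite intersection but which has no pseudo-intersection; $\mathfrak t$ is the least length of a $\subseteq^*$-decreasing sequence in $[\omega]^{\aleph_0}$ with no pseudo-intersection. $\mathcal B$ exemplifies $\mathfrak p$ if it is closed under finite intersections, has no pseudo-intersection, and $|\mathcal B|=\mathfrak p$. $\mathbf S$ is the family of all sequences $\bar\eta=\langle\eta_n:n\in B\rangle$ with $B\subseteq\omega$ infinite such that for each $n\in B$, $\eta_n$ is a function from $[n,k)$ to $\{0,1\}$ for some $k\in(n,\omega)$; $\mathrm{dom}(\bar\eta)=B$, $\mathrm{set}(\eta_n)=\{\ell:\eta_n(\ell)=1\}$, $\mathrm{set}(\bar\eta)=\bigcup_n\mathrm{set}(\eta_n)$. $\mathbf S_{\bar A}$ is the set of $\bar\eta\in\mathbf S$ with $\mathrm{set}(\bar\eta)\subseteq^*A_i$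 for all $i<\kappa$ and $\mathrm{set}(\eta_n)\ne\emptyset$ for all $n\in\mathrm{dom}(\bar\eta)$. $\eta\trianglelefteq\nu$ means $\nu$ extends $\eta$; $\bar\eta\le^*\bar\nu$ means that for all sufficiently large $n$, if $n\in\mathrm{dom}(\bar\nu)$ then $n\in\mathrm{dom}(\bar\eta)$ and $\eta_n\trianglelefteq\nu_n$. *)

theory Defs
  imports Main
begin

unbundle cardinal_syntax

definition almost_sub :: "nat set \<Rightarrow> nat set \<Rightarrow> bool" where
  "almost_sub A B \<longleftrightarrow> finite (A - B)"

definition pseudo_int :: "nat set \<Rightarrow> nat set set \<Rightarrow> bool" where
  "pseudo_int A \<C> \<longleftrightarrow> infinite A \<and> (\<forall>C\<in>\<C>. almost_sub A C)"

definition p_family :: "nat set set \<Rightarrow> bool" where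
  "p_family \<B> \<longleftrightarrow> (\<forall>B\<in>\<B>. infinite B) \<and>
     (\<forall>\<G>. finite \<G> \<and> \<G> \<noteq> {} \<and> \<G> \<subseteq> \<B> \<longrightarrow> infinite (\<Inter>\<G>)) \<and>
     \<not> (\<exists>A. pseudo_int A \<B>)"

definition is_frak_p :: "'a rel \<Rightarrow> bool" where
  "is_frak_p r \<longleftrightarrow> Card_order r \<and> (\<exists>\<B>. p_family \<B> \<and> (card_of \<B>) =o r) \<and>
     (\<forall>\<B>. p_family \<B> \<longrightarrow> r \<le>o (card_of \<B>))"

text \<open>lam < t, for an infinite cardinal order lam on a type 'a: every
  almost-decreasing sequence of infinite sets indexed by a subset K of Field lam
  (ordered by lam, hence of order type at most lam; every ordinal at most lam arises so)
  has a pseudo-intersection.\<close>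
definition less_frak_t :: "'a rel \<Rightarrow> bool" where
  "less_frak_t lam \<longleftrightarrow> (\<forall>(K::'a set) (X::'a \<Rightarrow> nat set). K \<subseteq> Field lam \<longrightarrow>
      (\<forall>i\<in>K. infinite (X i)) \<longrightarrow>
      (\<forall>i\<in>K. \<forall>j\<in>K. (i, j) \<in> lam \<longrightarrow> almost_sub (X j) (X i)) \<longrightarrow>
      (\<exists>A. pseudo_int A (X ` K)))"

definition exemplifies_p :: "'a rel \<Rightarrow> nat set set \<Rightarrow> bool" where
  "exemplifies_p lam \<B> \<longleftrightarrow> (\<forall>B\<in>\<B>. infinite B) \<and> (\<forall>X\<in>\<B>. \<forall>Y\<in>\<B>. X \<inter> Y \<in> \<B>) \<and>
     \<not> (\<exists>A. pseudo_int A \<B>) \<and> (card_of \<B>) =o lam"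

text \<open>Regular (infinite) cardinal given as the initial segment below k of the well-order lam.\<close>
definition regular_below :: "'a rel \<Rightarrow> 'a \<Rightarrow> bool" where
  "regular_below lam k \<longleftrightarrow> infinite (underS lam k) \<and>
     Card_order (Restr lam (underS lam k)) \<and> regularCard (Restr lam (underS lam k))"

definition strict_lt :: "'a rel \<Rightarrow> 'a \<Rightarrow> 'a \<Rightarrow> bool" where
  "strict_lt lam a b \<longleftrightarrow> (a, b) \<in> lam \<and> a \<noteq> b"

definition is_succ :: "'a rel \<Rightarrow> 'a \<Rightarrow> 'a \<Rightarrow> bool" where
  "is_succ lam a b \<longleftrightarrow> strict_lt lam a b \<and> (\<forall>c. strict_lt lam a c \<longrightarrow> (b, c) \<in> lam)"

text \<open>A finite 0-1 function eta_n with domain [n,k) is a partial map nat to bool;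
  a sequence bar-eta is a map n to option of such, domain = where it is defined.\<close>
type_synonym seqS = "nat \<Rightarrow> (nat \<rightharpoonup> bool) option"

definition sdom :: "seqS \<Rightarrow> nat set" where
  "sdom e = {n. e n \<noteq> None}"

definition fset :: "(nat \<rightharpoonup> bool) \<Rightarrow> nat set" where
  "fset \<eta> = {l. \<eta> l = Some True}"

definition sset :: "seqS \<Rightarrow> nat set" where
  "sset e = (\<Union>n\<in>sdom e. fset (the (e n)))"

definition in_S :: "seqS \<Rightarrow> bool" where
  "in_S e \<longleftrightarrow> infinite (sdom e) \<and>
     (\<forall>n \<eta>. e n = Some \<eta> \<longrightarrow> (\<exists>k>n. dom \<eta> = {n..<k}))"

definition in_S_A :: "'a rel \<Rightarrow> 'a \<Rightarrow> ('a \<Rightarrow> nat set) \<Rightarrow> seqS \<Rightarrow> bool" where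
  "in_S_A lam k A e \<longleftrightarrow> in_S e \<and> (\<forall>i. strict_lt lam i k \<longrightarrow> almost_sub (sset e) (A i)) \<and>
     (\<forall>n\<in>sdom e. fset (the (e n)) \<noteq> {})"

definition le_star :: "seqS \<Rightarrow> seqS \<Rightarrow> bool" where
  "le_star e f \<longleftrightarrow> (\<exists>N. \<forall>n\<ge>N. n \<in> sdom f \<longrightarrow>
      n \<in> sdom e \<and> the (e n) \<subseteq>\<^sub>m the (f n))"

definition choices :: "'a rel \<Rightarrow> 'a \<Rightarrow> ('a \<Rightarrow> nat set) \<Rightarrow> ('a \<Rightarrow> nat set) \<Rightarrow> 'a \<Rightarrow> nat set set" where
  "choices lam k A B b = {B b} \<union> (if strict_lt lam b k then {A b} else {})"

end

theory Submission
  imports Defs "HOL-Library.Countable_Set"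
begin

text \<open>
  The sequence is built by recursion along \<open>lam\<close>, keeping all stages sparse: every block
  ends before the next index of the domain.

  At each stage an upper bound of the fewer than \<open>\<lambda>\<close> earlier stages is found by coding
  blocks as finite objects. The domains of the earlier stages form a tower of length less than \<open>t\<close>, so they have
  a common pseudo-intersection \<open>D\<close>; at \<open>x \<in> D\<close> each stage has a block fitting below the next
  point of \<open>D\<close>. The codes of blocks of that length extending the block of a given stage,
  together with the codes of blocks inside a given \<open>A i\<close>, form fewer than \<open>p\<close> sets with the
  strong finite intersection property. A pseudo-intersection of them decodes to an upper bound
  in \<open>S_A\<close>.

  At the successor of \<open>\<alpha> = pr (\<beta>, \<gamma>)\<close> every block of the bound gets one more point, taken
  from an infinite set inside \<open>B \<alpha>\<close> and inside all admissible \<open>X\<close> and \<open>Y\<close> that is almost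
  contained in every \<open>A i\<close> (a tower of length \<open>\<kappa> < t\<close>). By the pigeonhole principle an infinite
  part of the domain has the same outcome of the finitely many comparisons of minima.

  The top element comes from the same coding applied to the tower of all \<open>\<lambda>\<close> stages, which has
  a pseudo-intersection because \<open>\<lambda> = p < t\<close>.
\<close>

section \<open>Almost inclusion and the cardinals p and t\<close>

lemma infinite_Int_if_almost_sub:
  assumes "infinite Z" "finite (Z - X)"
  shows "infinite (Z \<inter> X)"
  using Diff_infinite_finite[OF assms(2,1)] by (simp add: Diff_Diff_Int)

lemma infinite_Int_Inter:
  assumes "infinite T" "finite \<G>" "\<And>S. S \<in> \<G> \<Longrightarrow> finite (T - S)"
  shows "infinite (T \<inter> \<Inter>\<G>)"
proof -
  have "finite (\<Union>S\<in>\<G>. T - S)"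
    using assms(2,3) by (intro finite_UN_I)
  moreover have "T - \<Inter>\<G> \<subseteq> (\<Union>S\<in>\<G>. T - S)"
    by blast
  ultimately have "finite (T - \<Inter>\<G>)"
    by (rule finite_subset[rotated])
  then show ?thesis
    by (rule infinite_Int_if_almost_sub[OF assms(1)])
qed

lemma bij_finite_image_iff:
  assumes "bij f"
  shows "finite (f ` X) \<longleftrightarrow> finite X"
  using assms by (meson bij_is_inj finite_image_iff inj_on_subset subset_UNIV)

lemma bij_finite_image_diff_iff:
  assumes "bij f"
  shows "finite (f ` X - f ` Y) \<longleftrightarrow> finite (X - Y)"
  using assms by (simp add: bij_is_inj image_set_diff[symmetric] bij_finite_image_iff)

lemma bij_vimage_pseudo_int:
  assumes "bij f" "infinite P" "\<forall>i\<in>I. finite (P - f ` X i)"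
  shows "infinite (f -` P)" "\<forall>i\<in>I. finite (f -` P - X i)"
proof -
  show "infinite (f -` P)"
    using assms(1,2) by (metis bij_is_surj finite_imageI surj_image_vimage_eq)
  show "\<forall>i\<in>I. finite (f -` P - X i)"
  proof
    fix i assume "i \<in> I"
    moreover have "f ` (f -` P - X i) = P - f ` X i"
      using assms(1) by (simp add: bij_is_inj bij_is_surj image_set_diff surj_image_vimage_eq)
    ultimately have "finite (f ` (f -` P - X i))"
      using assms(3) by simp
    then show "finite (f -` P - X i)"
      using bij_finite_image_iff[OF assms(1)] by blast
  qed
qed

lemma countable_pseudo_int_of_tower:
  fixes X :: "'a \<Rightarrow> 'c::countable set"
  assumes "less_frak_t lam" "infinite (UNIV :: 'c set)" "K \<subseteq> Field lam"
    and "\<forall>i\<in>K. infinite (X i)" "\<forall>i\<in>K. \<forall>j\<in>K. (i, j) \<in> lam \<longrightarrow> finite (X j - X i)"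
  obtains Z where "infinite Z" "\<forall>i\<in>K. finite (Z - X i)"
proof -
  obtain f :: "'c \<Rightarrow> nat" where f: "bij f"
    using countableE_infinite[OF countableI_type assms(2)] by blast
  have "\<exists>P. pseudo_int P ((\<lambda>i. f ` X i) ` K)"
    using assms(1)[unfolded less_frak_t_def, rule_format, of K "\<lambda>i. f ` X i"] assms(3-5)
    by (simp add: almost_sub_def bij_finite_image_diff_iff[OF f] bij_finite_image_iff[OF f])
  then obtain P where P: "infinite P" "\<forall>i\<in>K. finite (P - f ` X i)"
    by (auto simp: pseudo_int_def almost_sub_def)
  show thesis
    using bij_vimage_pseudo_int[OF f P] by (rule that)
qed

lemma countable_pseudo_int_of_small_sfip:
  fixes F :: "'c::countable set set"
  assumes "is_frak_p lam" "infinite (UNIV :: 'c set)" "|F| <o lam"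
    and sfip: "\<forall>G. finite G \<and> G \<noteq> {} \<and> G \<subseteq> F \<longrightarrow> infinite (\<Inter>G)"
  obtains Z where "infinite Z" "\<forall>S\<in>F. finite (Z - S)"
proof -
  obtain f :: "'c \<Rightarrow> nat" where f: "bij f"
    using countableE_infinite[OF countableI_type assms(2)] by blast
  let ?F = "image f ` F"
  have "\<not> p_family ?F"
  proof
    assume "p_family ?F"
    then have "lam \<le>o |?F|"
      using assms(1) by (auto simp: is_frak_p_def)
    moreover have "|?F| <o lam"
      using assms(3) card_of_image ordLeq_ordLess_trans by blast
    ultimately show False
      using not_ordLess_ordLeq by blast
  qed
  moreover have sfip': "infinite (\<Inter>G)" if G: "finite G" "G \<noteq> {}" "G \<subseteq> ?F" for G
  proof -
    obtain G' where G': "G' \<subseteq> F" "finite G'" "G = image f ` G'"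
      using finite_subset_image[OF G(1,3)] by blast
    then have "\<Inter>G = f ` \<Inter>G'"
      using bij_image_INT[OF f, of "\<lambda>S. S" G'] by simp
    then show ?thesis
      using sfip G' G(2) by (auto simp: bij_finite_image_iff[OF f])
  qed
  moreover have "\<forall>B\<in>?F. infinite B"
    using sfip'[of "{_}"] by auto
  ultimately obtain P where P: "infinite P" "\<forall>S\<in>F. finite (P - f ` S)"
    by (auto simp: p_family_def pseudo_int_def almost_sub_def)
  show thesis
    using bij_vimage_pseudo_int[where X="\<lambda>S. S", OF f P] by (rule that)
qed

lemma exists_pseudo_int_inside:
  fixes X :: "'a \<Rightarrow> nat set"
  assumes "less_frak_t lam" "I \<subseteq> Field lam" "i0 \<in> I"
    and "\<forall>i\<in>I. \<forall>j\<in>I. (i, j) \<in> lam \<longrightarrow> finite (X j - X i)"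
    and "\<forall>i\<in>I. infinite (X i \<inter> C)"
  obtains P where "infinite P" "P \<subseteq> C" "\<forall>i\<in>I. finite (P - X i)"
proof -
  have "finite (X j \<inter> C - X i \<inter> C)" if "i \<in> I" "j \<in> I" "(i, j) \<in> lam" for i j
    using assms(4) that finite_subset[of "X j \<inter> C - X i \<inter> C" "X j - X i"] by blast
  then have "\<exists>P. pseudo_int P ((\<lambda>i. X i \<inter> C) ` I)"
    using assms(1)[unfolded less_frak_t_def, rule_format, of I "\<lambda>i. X i \<inter> C"] assms(2,5)
    by (simp add: almost_sub_def)
  then obtain P0 where P0: "infinite P0" "\<forall>i\<in>I. finite (P0 - X i \<inter> C)"
    by (auto simp: pseudo_int_def almost_sub_def)
  have "finite (P0 - C)"
    using P0(2) assms(3) finite_subset[of "P0 - C" "P0 - X i0 \<inter> C"] by blast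
  then have "infinite (P0 \<inter> C)"
    using infinite_Int_if_almost_sub[OF P0(1)] by blast
  moreover have "\<forall>i\<in>I. finite (P0 \<inter> C - X i)"
    using P0(2) finite_subset[of "P0 \<inter> C - X i" "P0 - X i \<inter> C" for i] by blast
  ultimately show thesis
    using that by blast
qed

section \<open>Sequences in S\<close>

lemma sdom_eq_dom: "sdom e = dom e"
  by (simp add: sdom_def dom_def)

lemma in_S_block:
  assumes "in_S e" "x \<in> sdom e"
  obtains k where "x < k" "dom (the (e x)) = {x..<k}"
proof -
  obtain \<eta> where "e x = Some \<eta>"
    using assms(2) by (auto simp: sdom_def)
  moreover obtain k where "x < k" "dom \<eta> = {x..<k}"
    using assms(1) calculation unfolding in_S_def by blast
  ultimately show thesis
    using that by simp
qed

lemma fset_subset_dom: "fset \<eta> \<subseteq> dom \<eta>"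
  by (auto simp: fset_def)

lemma fset_mono: "\<eta> \<subseteq>\<^sub>m \<nu> \<Longrightarrow> fset \<eta> \<subseteq> fset \<nu>"
  by (auto simp: fset_def map_le_def dom_def)

lemma in_S_dom_ge:
  assumes "in_S e" "x \<in> sdom e"
  shows "dom (the (e x)) \<subseteq> {x..}"
proof -
  obtain k where "dom (the (e x)) = {x..<k}"
    using in_S_block[OF assms] by blast
  then show ?thesis
    by auto
qed

lemma in_S_start:
  assumes "in_S e" "x \<in> sdom e"
  shows "x \<in> dom (the (e x))"
proof -
  obtain k where "x < k" "dom (the (e x)) = {x..<k}"
    using in_S_block[OF assms] by blast
  then show ?thesis
    by simp
qed

lemma in_S_fset_ge:
  assumes "in_S e" "x \<in> sdom e" "l \<in> fset (the (e x))"
  shows "x \<le> l"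
proof -
  have "l \<in> {x..}"
    using in_S_dom_ge[OF assms(1,2)] fset_subset_dom[of "the (e x)"] assms(3) by blast
  then show ?thesis
    by simp
qed

lemma le_star_refl: "le_star e e"
  by (auto simp: le_star_def)

lemma le_star_trans:
  assumes "le_star e f" "le_star f g"
  shows "le_star e g"
proof -
  obtain N1 where N1: "\<forall>n\<ge>N1. n \<in> sdom f \<longrightarrow> n \<in> sdom e \<and> the (e n) \<subseteq>\<^sub>m the (f n)"
    using assms(1) by (auto simp: le_star_def)
  obtain N2 where N2: "\<forall>n\<ge>N2. n \<in> sdom g \<longrightarrow> n \<in> sdom f \<and> the (f n) \<subseteq>\<^sub>m the (g n)"
    using assms(2) by (auto simp: le_star_def)
  have "\<forall>n\<ge>max N1 N2. n \<in> sdom g \<longrightarrow> n \<in> sdom e \<and> the (e n) \<subseteq>\<^sub>m the (g n)"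
  proof (intro allI impI)
    fix n assume "max N1 N2 \<le> n" "n \<in> sdom g"
    then show "n \<in> sdom e \<and> the (e n) \<subseteq>\<^sub>m the (g n)"
      using N1[rule_format, of n] N2[rule_format, of n] map_le_trans by auto
  qed
  then show ?thesis
    unfolding le_star_def by blast
qed

lemma le_star_sdom:
  assumes "le_star e f"
  shows "finite (sdom f - sdom e)"
proof -
  obtain N where "\<forall>n\<ge>N. n \<in> sdom f \<longrightarrow> n \<in> sdom e"
    using assms by (auto simp: le_star_def)
  then have "sdom f - sdom e \<subseteq> {..<N}"
    by (auto simp: not_less[symmetric])
  then show ?thesis
    using finite_subset by blast
qed

lemma sdom_restrict: "sdom (e |` D) = sdom e \<inter> D"
  by (simp add: sdom_eq_dom)

lemma sset_restrict: "sset (e |` D) \<subseteq> sset e"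
  by (auto simp: sset_def sdom_restrict)

lemma le_star_restrict: "le_star e (e |` D)"
  by (auto simp: le_star_def sdom_restrict)

lemma in_S_restrict:
  assumes "in_S e" "infinite (sdom e \<inter> D)"
  shows "in_S (e |` D)"
  using assms unfolding in_S_def sdom_restrict by (simp add: restrict_map_def)

lemma in_S_A_restrict:
  assumes "in_S_A lam k A e" "infinite (sdom e \<inter> D)"
  shows "in_S_A lam k A (e |` D)"
proof -
  have "finite (sset (e |` D) - A i)" if "finite (sset e - A i)" for i
    using that sset_restrict[of e D] by (meson Diff_mono finite_subset order_refl)
  then show ?thesis
    using assms in_S_restrict[of e D] by (auto simp: in_S_A_def almost_sub_def sdom_restrict)
qed

definition sparse :: "seqS \<Rightarrow> bool" where
  "sparse e \<longleftrightarrow> (\<forall>x\<in>sdom e. \<forall>y\<in>sdom e. x < y \<longrightarrow> dom (the (e x)) \<subseteq> {..<y})"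

lemma sparsify:
  assumes "in_S e" "infinite D" "D \<subseteq> sdom e"
  obtains D' where "D' \<subseteq> D" "infinite D'" "sparse (e |` D')"
proof -
  have above: "\<exists>y. y \<in> D \<and> dom (the (e x)) \<subseteq> {..<y}" if x: "x \<in> D" for x
  proof -
    obtain k where "dom (the (e x)) = {x..<k}"
      using in_S_block[OF assms(1) subsetD[OF assms(3) x]] by blast
    moreover obtain y where "y \<in> D" "k \<le> y"
      using assms(2) infinite_nat_iff_unbounded_le by blast
    ultimately have "y \<in> D \<and> dom (the (e x)) \<subseteq> {..<y}"
      by auto
    then show ?thesis ..
  qed
  obtain x0 where "x0 \<in> D"
    using assms(2) infinite_imp_nonempty by blast
  then obtain f where f: "\<And>n. f n \<in> D" "\<And>n. dom (the (e (f n))) \<subseteq> {..<f (Suc n)}"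
    using dependent_nat_choice[where P="\<lambda>_ x. x \<in> D"
        and Q="\<lambda>_ x y. dom (the (e x)) \<subseteq> {..<y}"] above
    by metis
  have "f n < f (Suc n)" for n
    using in_S_start[OF assms(1) subsetD[OF assms(3) f(1)]] f(2) by blast
  then have mono: "strict_mono f"
    by (simp add: strict_mono_Suc_iff)
  have "sparse (e |` range f)"
    unfolding sparse_def sdom_restrict
  proof (intro ballI impI)
    fix x y assume "x \<in> sdom e \<inter> range f" "y \<in> sdom e \<inter> range f" "x < y"
    then obtain i j where ij: "x = f i" "y = f j"
      by blast
    with \<open>x < y\<close> have "i < j"
      using mono by (simp add: strict_mono_less)
    then have "f (Suc i) \<le> y"
      using mono ij by (simp add: strict_mono_less_eq)
    then show "dom (the ((e |` range f) x)) \<subseteq> {..<y}"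
      using f(2)[of i] ij by auto
  qed
  moreover have "infinite (range f)"
    using mono strict_mono_imp_inj_on range_inj_infinite by blast
  moreover have "range f \<subseteq> D"
    using f(1) by blast
  ultimately show thesis
    using that by blast
qed

section \<open>Coding blocks by finite objects\<close>

definition blk :: "nat \<Rightarrow> bool list \<Rightarrow> (nat \<rightharpoonup> bool)" where
  "blk x bs = (\<lambda>l. if x \<le> l \<and> l < x + length bs then Some (bs ! (l - x)) else None)"

lemma dom_blk: "dom (blk x bs) = {x..<x + length bs}"
  by (auto simp: blk_def dom_def)

lemma finite_fset_blk: "finite (fset (blk x bs))"
  using fset_subset_dom[of "blk x bs"] by (simp add: dom_blk finite_subset)

lemma exists_blk_extension:
  assumes "dom \<eta> \<subseteq> {x..<y}"
  shows "\<exists>bs. length bs = y - x \<and> \<eta> \<subseteq>\<^sub>m blk x bs \<and> fset (blk x bs) = fset \<eta>"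
proof -
  define bs where "bs = map (\<lambda>l. \<eta> l = Some True) [x..<y]"
  have blk: "blk x bs l = (if x \<le> l \<and> l < y then Some (\<eta> l = Some True) else None)" for l
    by (auto simp: blk_def bs_def)
  have "\<eta> \<subseteq>\<^sub>m blk x bs"
    unfolding map_le_def
  proof
    fix l assume "l \<in> dom \<eta>"
    then show "\<eta> l = blk x bs l"
      using assms by (auto simp: blk)
  qed
  moreover have "fset (blk x bs) = fset \<eta>"
    using assms by (auto simp: fset_def blk)
  ultimately show ?thesis
    by (intro exI[of _ bs]) (simp add: bs_def)
qed

definition next_in :: "nat set \<Rightarrow> nat \<Rightarrow> nat" where
  "next_in D x = (LEAST y. y \<in> D \<and> x < y)"

lemma next_in:
  assumes "infinite D"
  shows "next_in D x \<in> D" "x < next_in D x" "y \<in> D \<Longrightarrow> x < y \<Longrightarrow> next_in D x \<le> y"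
proof -
  obtain z where "z \<in> D" "x < z"
    using assms infinite_nat_iff_unbounded by blast
  then have "next_in D x \<in> D \<and> x < next_in D x"
    unfolding next_in_def by (metis (mono_tags, lifting) LeastI)
  then show "next_in D x \<in> D" "x < next_in D x"
    by auto
  show "y \<in> D \<Longrightarrow> x < y \<Longrightarrow> next_in D x \<le> y"
    unfolding next_in_def by (simp add: Least_le)
qed

text \<open>
  Sparseness lets the block at \<open>x \<in> D\<close> be padded to the fixed length \<open>next_in D x - x\<close>, so
  only finitely many codes share a first coordinate.
\<close>

definition blocks :: "nat set \<Rightarrow> (nat \<times> bool list) set" where
  "blocks D = {(x, bs). x \<in> D \<and> length bs = next_in D x - x}"

definition extending_blocks :: "nat set \<Rightarrow> seqS \<Rightarrow> (nat \<times> bool list) set" where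
  "extending_blocks D e = {(x, bs) \<in> blocks D. x \<in> sdom e \<and> the (e x) \<subseteq>\<^sub>m blk x bs}"

definition tight_blocks :: "nat set \<Rightarrow> seqS \<Rightarrow> (nat \<times> bool list) set" where
  "tight_blocks D e = {(x, bs) \<in> extending_blocks D e. fset (blk x bs) = fset (the (e x))}"

definition blocks_inside :: "nat set \<Rightarrow> (nat \<times> bool list) set" where
  "blocks_inside Y = {(x, bs). fset (blk x bs) \<subseteq> Y}"

lemma finite_blocks_iff:
  assumes "W \<subseteq> blocks D"
  shows "finite W \<longleftrightarrow> finite (fst ` W)"
proof
  assume "finite (fst ` W)"
  moreover have "W \<subseteq> (\<Union>x\<in>fst ` W. {x} \<times> {bs. set bs \<subseteq> UNIV \<and> length bs = next_in D x - x})"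
    using assms by (force simp: blocks_def)
  moreover have "finite {bs::bool list. set bs \<subseteq> UNIV \<and> length bs = n}" for n
    by (rule finite_lists_length_eq) simp
  ultimately show "finite W"
    by (meson finite_UN_I finite_insert finite.emptyI finite_SigmaI finite_subset)
qed simp

lemma extending_blocks_subset: "extending_blocks D e \<subseteq> blocks D"
  by (auto simp: extending_blocks_def)

lemma tight_blocks_subset: "tight_blocks D e \<subseteq> extending_blocks D e"
  by (auto simp: tight_blocks_def)

lemma infinite_tight_blocks:
  assumes "in_S e" "sparse e" "infinite D" "finite (D - sdom e)"
  shows "infinite (tight_blocks D e)"
proof -
  obtain N where N: "\<forall>x\<in>D - sdom e. x < N"
    using assms(4) finite_nat_set_iff_bounded by blast
  have "D - {..<N} \<subseteq> fst ` tight_blocks D e"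
  proof
    fix x assume x: "x \<in> D - {..<N}"
    have nx: "next_in D x \<in> D" "x < next_in D x"
      using next_in[OF assms(3)] by auto
    have x_dom: "x \<in> sdom e"
      using N x by auto
    have "N \<le> next_in D x"
      using x nx by auto
    then have "next_in D x \<in> sdom e"
      using N nx(1) by (meson Diff_iff not_less)
    then have "dom (the (e x)) \<subseteq> {..<next_in D x}"
      using assms(2) nx(2) x_dom unfolding sparse_def by blast
    moreover have "dom (the (e x)) \<subseteq> {x..}"
      using in_S_dom_ge[OF assms(1) x_dom] .
    ultimately have "dom (the (e x)) \<subseteq> {x..<next_in D x}"
      by (simp add: atLeastLessThan_def)
    then obtain bs where "length bs = next_in D x - x" "the (e x) \<subseteq>\<^sub>m blk x bs"
      "fset (blk x bs) = fset (the (e x))"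
      using exists_blk_extension by blast
    then have "(x, bs) \<in> tight_blocks D e"
      using x x_dom
      by (simp add: tight_blocks_def extending_blocks_def blocks_def)
    then show "x \<in> fst ` tight_blocks D e"
      by force
  qed
  moreover have "infinite (D - {..<N})"
    using assms(3) by simp
  ultimately show ?thesis
    using finite_surj by blast
qed

lemma extending_blocks_antimono:
  assumes "le_star e f"
  shows "finite (extending_blocks D f - extending_blocks D e)"
proof -
  obtain N where N: "\<forall>n\<ge>N. n \<in> sdom f \<longrightarrow> n \<in> sdom e \<and> the (e n) \<subseteq>\<^sub>m the (f n)"
    using assms by (auto simp: le_star_def)
  have "fst ` (extending_blocks D f - extending_blocks D e) \<subseteq> {..<N}"
  proof
    fix x assume "x \<in> fst ` (extending_blocks D f - extending_blocks D e)"
    then obtain bs where f: "(x, bs) \<in> extending_blocks D f" and e: "(x, bs) \<notin> extending_blocks D e"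
      by auto
    show "x \<in> {..<N}"
    proof (rule ccontr)
      assume "x \<notin> {..<N}"
      then have "x \<in> sdom e" "the (e x) \<subseteq>\<^sub>m the (f x)"
        using N f by (auto simp: extending_blocks_def)
      then show False
        using f e map_le_trans by (auto simp: extending_blocks_def)
    qed
  qed
  then show ?thesis
    using finite_blocks_iff[of _ D] extending_blocks_subset
    by (meson Diff_subset finite_lessThan finite_subset subset_trans)
qed

lemma tight_blocks_inside:
  assumes "in_S e" "finite (sset e - Y)"
  shows "finite (tight_blocks D e - blocks_inside Y)"
proof -
  obtain N where N: "\<forall>l\<in>sset e - Y. l < N"
    using assms(2) finite_nat_set_iff_bounded by blast
  have "fst ` (tight_blocks D e - blocks_inside Y) \<subseteq> {..<N}"
  proof
    fix x assume "x \<in> fst ` (tight_blocks D e - blocks_inside Y)"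
    then obtain bs where "(x, bs) \<in> tight_blocks D e" "(x, bs) \<notin> blocks_inside Y"
      by force
    then have "(x, bs) \<in> tight_blocks D e" "\<not> fset (blk x bs) \<subseteq> Y"
      by (simp_all add: blocks_inside_def)
    then have x: "x \<in> sdom e" and "\<not> fset (the (e x)) \<subseteq> Y"
      by (auto simp: tight_blocks_def extending_blocks_def)
    then obtain l where "l \<in> fset (the (e x))" "l \<notin> Y"
      by blast
    then have "x \<le> l" "l < N"
      using in_S_fset_ge[OF assms(1) x] N x by (auto simp: sset_def)
    then show "x \<in> {..<N}"
      by simp
  qed
  then show ?thesis
    using finite_blocks_iff[of _ D] tight_blocks_subset extending_blocks_subset
    by (meson Diff_subset finite_lessThan finite_subset subset_trans)
qed

definition seq_of_blocks :: "(nat \<times> bool list) set \<Rightarrow> seqS" where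
  "seq_of_blocks W x =
     (if \<exists>bs. (x, bs) \<in> W then Some (blk x (SOME bs. (x, bs) \<in> W)) else None)"

lemma sdom_seq_of_blocks: "sdom (seq_of_blocks W) = fst ` W"
  by (auto simp: sdom_def seq_of_blocks_def fst_eq_Domain)

lemma seq_of_blocks_at:
  assumes "x \<in> sdom (seq_of_blocks W)"
  obtains bs where "(x, bs) \<in> W" "the (seq_of_blocks W x) = blk x bs"
proof -
  have ex: "\<exists>bs. (x, bs) \<in> W"
    using assms by (simp add: sdom_seq_of_blocks fst_eq_Domain Domain_iff)
  then have "(x, SOME bs. (x, bs) \<in> W) \<in> W"
    by (rule someI_ex)
  moreover have "the (seq_of_blocks W x) = blk x (SOME bs. (x, bs) \<in> W)"
    using ex by (simp add: seq_of_blocks_def)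
  ultimately show thesis
    by (rule that)
qed

lemma dom_seq_of_blocks:
  assumes "infinite D" "W \<subseteq> blocks D" "x \<in> sdom (seq_of_blocks W)"
  shows "dom (the (seq_of_blocks W x)) = {x..<next_in D x}"
proof -
  obtain bs where "(x, bs) \<in> W" "the (seq_of_blocks W x) = blk x bs"
    using seq_of_blocks_at[OF assms(3)] .
  moreover from calculation have "length bs = next_in D x - x"
    using assms(2) by (auto simp: blocks_def)
  ultimately show ?thesis
    using next_in(2)[OF assms(1), of x] by (simp add: dom_blk)
qed

lemma in_S_seq_of_blocks:
  assumes "infinite D" "W \<subseteq> blocks D" "infinite W"
  shows "in_S (seq_of_blocks W)"
  unfolding in_S_def
proof (intro conjI allI impI)
  show "infinite (sdom (seq_of_blocks W))"
    using assms(2,3) finite_blocks_iff by (simp add: sdom_seq_of_blocks)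
  fix n \<eta> assume "seq_of_blocks W n = Some \<eta>"
  then have "n \<in> sdom (seq_of_blocks W)" "\<eta> = the (seq_of_blocks W n)"
    by (simp_all add: sdom_def)
  then show "\<exists>k>n. dom \<eta> = {n..<k}"
    using dom_seq_of_blocks[OF assms(1,2)] next_in(2)[OF assms(1)] by blast
qed

lemma sparse_seq_of_blocks:
  assumes "infinite D" "W \<subseteq> blocks D"
  shows "sparse (seq_of_blocks W)"
  unfolding sparse_def
proof (intro ballI impI)
  fix x y assume x: "x \<in> sdom (seq_of_blocks W)" and y: "y \<in> sdom (seq_of_blocks W)" and "x < y"
  have "y \<in> D"
    using y assms(2) by (auto simp: sdom_seq_of_blocks blocks_def)
  then have "next_in D x \<le> y"
    using next_in(3)[OF assms(1)] \<open>x < y\<close> by blast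
  then show "dom (the (seq_of_blocks W x)) \<subseteq> {..<y}"
    using dom_seq_of_blocks[OF assms x] by auto
qed

lemma le_star_seq_of_blocks:
  assumes "finite (W - extending_blocks D e)"
  shows "le_star e (seq_of_blocks W)"
proof -
  obtain N where N: "\<forall>x\<in>fst ` (W - extending_blocks D e). x < N"
    using assms finite_nat_set_iff_bounded by blast
  have "n \<in> sdom e \<and> the (e n) \<subseteq>\<^sub>m the (seq_of_blocks W n)"
    if n: "N \<le> n" "n \<in> sdom (seq_of_blocks W)" for n
  proof -
    obtain bs where "(n, bs) \<in> W" "the (seq_of_blocks W n) = blk n bs"
      using seq_of_blocks_at[OF n(2)] .
    moreover have "(n, bs) \<in> extending_blocks D e"
    proof (rule ccontr)
      assume "(n, bs) \<notin> extending_blocks D e"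
      then have "n \<in> fst ` (W - extending_blocks D e)"
        using \<open>(n, bs) \<in> W\<close> by (metis DiffI fst_conv image_eqI)
      then have "n < N"
        using N by blast
      then show False
        using n(1) by simp
    qed
    ultimately show ?thesis
      by (simp add: extending_blocks_def)
  qed
  then show ?thesis
    unfolding le_star_def by blast
qed

lemma sset_seq_of_blocks:
  assumes "finite (W - blocks_inside Y)"
  shows "finite (sset (seq_of_blocks W) - Y)"
proof -
  have "sset (seq_of_blocks W) - Y \<subseteq> (\<Union>(x, bs)\<in>W - blocks_inside Y. fset (blk x bs))"
  proof
    fix l assume "l \<in> sset (seq_of_blocks W) - Y"
    then obtain x where x: "x \<in> sdom (seq_of_blocks W)" "l \<in> fset (the (seq_of_blocks W x))" "l \<notin> Y"
      by (auto simp: sset_def)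
    obtain bs where "(x, bs) \<in> W" "the (seq_of_blocks W x) = blk x bs"
      using seq_of_blocks_at[OF x(1)] .
    then have "(x, bs) \<in> W" "l \<in> fset (blk x bs)"
      using x(2) by simp_all
    with x(3) show "l \<in> (\<Union>(x, bs)\<in>W - blocks_inside Y. fset (blk x bs))"
      by (auto simp: blocks_inside_def)
  qed
  moreover have "finite (\<Union>(x, bs)\<in>W - blocks_inside Y. fset (blk x bs))"
    by (rule finite_UN_I[OF assms]) (simp add: finite_fset_blk split: prod.split)
  ultimately show ?thesis
    using finite_subset by blast
qed

lemma fset_seq_of_blocks_nonempty:
  assumes "W \<subseteq> extending_blocks D e" "\<forall>n\<in>sdom e. fset (the (e n)) \<noteq> {}"
    and "n \<in> sdom (seq_of_blocks W)"
  shows "fset (the (seq_of_blocks W n)) \<noteq> {}"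
proof -
  obtain bs where "(n, bs) \<in> W" "the (seq_of_blocks W n) = blk n bs"
    using seq_of_blocks_at[OF assms(3)] .
  then show ?thesis
    using assms(1,2) fset_mono[of "the (e n)" "blk n bs"] by (auto simp: extending_blocks_def)
qed

section \<open>Upper bounds of chains\<close>

lemma card_order_Field: "card_order lam \<Longrightarrow> Field lam = UNIV"
  using card_order_on_Card_order by blast

lemma card_order_Card_order: "card_order lam \<Longrightarrow> Card_order lam"
  using card_order_on_Card_order by blast

lemma card_order_wo_rel: "card_order lam \<Longrightarrow> wo_rel lam"
  unfolding wo_rel_def by (metis card_order_on_well_order_on card_order_Field)

lemma card_order_total: "card_order lam \<Longrightarrow> (a, b) \<in> lam \<or> (b, a) \<in> lam"
  using wo_rel.TOTALS[OF card_order_wo_rel] card_order_Field by blast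

lemma card_order_upper_bound:
  assumes "card_order lam" "finite F" "F \<subseteq> K" "\<beta>0 \<in> K"
  shows "\<exists>\<gamma>\<in>K. \<forall>\<beta>\<in>F. (\<beta>, \<gamma>) \<in> lam"
  using assms(2,3)
proof (induction F rule: finite_induct)
  case empty
  then show ?case
    using assms(4) by blast
next
  case (insert x F)
  then obtain \<gamma> where \<gamma>: "\<gamma> \<in> K" "\<forall>\<beta>\<in>F. (\<beta>, \<gamma>) \<in> lam"
    by blast
  interpret wo_rel lam
    using card_order_wo_rel[OF assms(1)] .
  have max: "(\<gamma>, max2 \<gamma> x) \<in> lam" "(x, max2 \<gamma> x) \<in> lam" "max2 \<gamma> x \<in> {\<gamma>, x}"
    using max2_greater_among[of \<gamma> x] card_order_Field[OF assms(1)] by auto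
  have "(\<beta>, max2 \<gamma> x) \<in> lam" if "\<beta> \<in> F" for \<beta>
    using \<gamma>(2) that max(1) TRANS by (meson transD)
  then have "\<forall>\<beta>\<in>insert x F. (\<beta>, max2 \<gamma> x) \<in> lam"
    using max(2) by blast
  moreover have "max2 \<gamma> x \<in> K"
    using max(3) \<gamma>(1) insert.prems by auto
  ultimately show ?case
    by blast
qed

lemma card_of_strict_lower_ordLess:
  assumes "card_order lam"
  shows "|{\<beta>. strict_lt lam \<beta> \<alpha>}| <o lam"
proof -
  have "{\<beta>. strict_lt lam \<beta> \<alpha>} = underS lam \<alpha>"
    by (auto simp: underS_def strict_lt_def)
  moreover have "|underS lam \<alpha>| <o lam"
    using card_of_underS[OF card_order_Card_order[OF assms]] card_order_Field[OF assms] by blast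
  ultimately show ?thesis
    by simp
qed

lemma is_succ_unique:
  assumes "card_order lam" "is_succ lam \<gamma> \<alpha>" "is_succ lam \<gamma>' \<alpha>"
  shows "\<gamma> = \<gamma>'"
proof (rule ccontr)
  assume ne: "\<gamma> \<noteq> \<gamma>'"
  have anti: "(a, b) \<in> lam \<Longrightarrow> (b, a) \<in> lam \<Longrightarrow> a = b" for a b
    using wo_rel.ANTISYM[OF card_order_wo_rel[OF assms(1)]] by (auto simp: antisym_def)
  have "strict_lt lam \<gamma> \<gamma>' \<or> strict_lt lam \<gamma>' \<gamma>"
    using card_order_total[OF assms(1)] ne by (auto simp: strict_lt_def)
  moreover have "\<not> strict_lt lam \<gamma> \<gamma>'" if "is_succ lam \<gamma> \<alpha>" "is_succ lam \<gamma>' \<alpha>" for \<gamma> \<gamma>'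
  proof
    assume "strict_lt lam \<gamma> \<gamma>'"
    then have "(\<alpha>, \<gamma>') \<in> lam"
      using that(1) by (simp add: is_succ_def)
    moreover have "(\<gamma>', \<alpha>) \<in> lam" "\<gamma>' \<noteq> \<alpha>"
      using that(2) by (simp_all add: is_succ_def strict_lt_def)
    ultimately show False
      using anti by blast
  qed
  ultimately show False
    using assms(2,3) by blast
qed

lemma exists_pseudo_int_of_sdoms:
  assumes "less_frak_t lam" "K \<subseteq> Field lam" "\<forall>\<beta>\<in>K. in_S (g \<beta>)"
    and "\<forall>\<beta>\<in>K. \<forall>\<beta>'\<in>K. (\<beta>, \<beta>') \<in> lam \<longrightarrow> le_star (g \<beta>) (g \<beta>')"
  obtains D where "infinite D" "\<forall>\<beta>\<in>K. finite (D - sdom (g \<beta>))"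
proof -
  have "\<exists>D. pseudo_int D ((\<lambda>\<beta>. sdom (g \<beta>)) ` K)"
    using assms(1)[unfolded less_frak_t_def, rule_format, of K "\<lambda>\<beta>. sdom (g \<beta>)"] assms(2-4)
    by (simp add: in_S_def almost_sub_def le_star_sdom)
  then show thesis
    using that by (auto simp: pseudo_int_def almost_sub_def)
qed

definition sparse_S_A :: "'l rel \<Rightarrow> 'l \<Rightarrow> ('l \<Rightarrow> nat set) \<Rightarrow> seqS \<Rightarrow> bool" where
  "sparse_S_A lam k A e \<longleftrightarrow> in_S_A lam k A e \<and> sparse e"

lemma infinite_UNIV_block_codes: "infinite (UNIV :: (nat \<times> bool list) set)"
  by (simp add: finite_prod)

lemma infinite_Inter_of_chain_blocks:
  assumes "card_order lam" "\<beta>0 \<in> K" "\<forall>\<beta>\<in>K. sparse_S_A lam k A (g \<beta>)"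
    and "\<forall>\<beta>\<in>K. \<forall>\<beta>'\<in>K. (\<beta>, \<beta>') \<in> lam \<longrightarrow> le_star (g \<beta>) (g \<beta>')"
    and "infinite D" "\<forall>\<beta>\<in>K. finite (D - sdom (g \<beta>))"
    and "finite \<G>"
    and "\<G> \<subseteq> (\<lambda>\<beta>. extending_blocks D (g \<beta>)) ` K \<union> (\<lambda>i. blocks_inside (A i)) ` {i. strict_lt lam i k}"
  shows "infinite (\<Inter>\<G>)"
proof -
  let ?E = "\<lambda>\<beta>. extending_blocks D (g \<beta>)"
  have "finite (\<G> \<inter> ?E ` K)" "\<G> \<inter> ?E ` K \<subseteq> ?E ` K"
    using assms(7) by simp_all
  then obtain K1 where K1: "K1 \<subseteq> K" "finite K1" "\<G> \<inter> ?E ` K = ?E ` K1"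
    using finite_subset_image by metis
  obtain \<gamma> where \<gamma>: "\<gamma> \<in> K" "\<forall>\<beta>\<in>K1. (\<beta>, \<gamma>) \<in> lam"
    using card_order_upper_bound[OF assms(1) K1(2,1) assms(2)] by blast
  have g\<gamma>: "in_S (g \<gamma>)" "sparse (g \<gamma>)" "\<forall>i. strict_lt lam i k \<longrightarrow> finite (sset (g \<gamma>) - A i)"
    using assms(3) \<gamma>(1) by (auto simp: sparse_S_A_def in_S_A_def almost_sub_def)
  \<comment> \<open>The tight blocks of the latest stage involved are almost contained in every member.\<close>
  have "finite (tight_blocks D (g \<gamma>) - S)" if S: "S \<in> \<G>" for S
  proof (cases "S \<in> ?E ` K")
    case True
    then obtain \<beta> where \<beta>: "\<beta> \<in> K1" "S = ?E \<beta>"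
      using K1(3) S by blast
    then have "le_star (g \<beta>) (g \<gamma>)"
      using assms(4) K1(1) \<gamma> by blast
    then have "finite (?E \<gamma> - S)"
      using extending_blocks_antimono \<beta>(2) by blast
    then show ?thesis
      using finite_subset[OF Diff_mono[OF tight_blocks_subset order_refl]] by blast
  next
    case False
    then obtain i where "strict_lt lam i k" "S = blocks_inside (A i)"
      using assms(8) S by blast
    then show ?thesis
      using tight_blocks_inside[OF g\<gamma>(1)] g\<gamma>(3) by blast
  qed
  moreover have "infinite (tight_blocks D (g \<gamma>))"
    using infinite_tight_blocks[OF g\<gamma>(1,2) assms(5)] assms(6) \<gamma>(1) by blast
  ultimately have "infinite (tight_blocks D (g \<gamma>) \<inter> \<Inter>\<G>)"
    using infinite_Int_Inter assms(7) by blast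
  then show ?thesis
    using finite_subset[OF Int_lower2] by blast
qed

lemma sparse_S_A_seq_of_blocks:
  assumes "infinite D" "W \<subseteq> extending_blocks D e" "infinite W" "sparse_S_A lam k A e"
    and "\<forall>i. strict_lt lam i k \<longrightarrow> finite (W - blocks_inside (A i))"
  shows "sparse_S_A lam k A (seq_of_blocks W)"
proof -
  have W: "W \<subseteq> blocks D"
    using assms(2) extending_blocks_subset by blast
  have "in_S_A lam k A (seq_of_blocks W)"
    unfolding in_S_A_def almost_sub_def
  proof (intro conjI allI impI ballI)
    show "in_S (seq_of_blocks W)"
      using in_S_seq_of_blocks[OF assms(1) W assms(3)] .
    show "finite (sset (seq_of_blocks W) - A i)" if "strict_lt lam i k" for i
      using sset_seq_of_blocks assms(5) that by blast
    show "fset (the (seq_of_blocks W n)) \<noteq> {}" if "n \<in> sdom (seq_of_blocks W)" for n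
      using fset_seq_of_blocks_nonempty[OF assms(2) _ that] assms(4)
      by (simp add: sparse_S_A_def in_S_A_def)
  qed
  moreover have "sparse (seq_of_blocks W)"
    using sparse_seq_of_blocks[OF assms(1) W] .
  ultimately show ?thesis
    by (simp add: sparse_S_A_def)
qed

lemma sparse_S_A_upper_bound:
  assumes "card_order lam" "is_frak_p lam" "less_frak_t lam" "infinite (Field lam)"
    and "|K| <o lam" "\<beta>0 \<in> K" "\<forall>\<beta>\<in>K. sparse_S_A lam k A (g \<beta>)"
    and "\<forall>\<beta>\<in>K. \<forall>\<beta>'\<in>K. (\<beta>, \<beta>') \<in> lam \<longrightarrow> le_star (g \<beta>) (g \<beta>')"
  obtains \<nu> where "sparse_S_A lam k A \<nu>" "\<forall>\<beta>\<in>K. le_star (g \<beta>) \<nu>"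
proof -
  have "\<forall>\<beta>\<in>K. in_S (g \<beta>)"
    using assms(7) by (simp add: sparse_S_A_def in_S_A_def)
  then obtain D where D: "infinite D" "\<forall>\<beta>\<in>K. finite (D - sdom (g \<beta>))"
    using exists_pseudo_int_of_sdoms[OF assms(3) _ _ assms(8)] card_order_Field[OF assms(1)] by blast
  define F where "F = (\<lambda>\<beta>. extending_blocks D (g \<beta>)) ` K \<union> (\<lambda>i. blocks_inside (A i)) ` {i. strict_lt lam i k}"
  have "|(\<lambda>\<beta>. extending_blocks D (g \<beta>)) ` K| <o lam"
    using card_of_image ordLeq_ordLess_trans assms(5) by blast
  moreover have "|(\<lambda>i. blocks_inside (A i)) ` {i. strict_lt lam i k}| <o lam"
    using card_of_image ordLeq_ordLess_trans card_of_strict_lower_ordLess[OF assms(1)] by blast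
  ultimately have "|F| <o lam"
    unfolding F_def
    by (intro card_of_Un_ordLess_infinite_Field card_order_Card_order[OF assms(1)] assms(4))
  moreover have "\<forall>\<G>. finite \<G> \<and> \<G> \<noteq> {} \<and> \<G> \<subseteq> F \<longrightarrow> infinite (\<Inter>\<G>)"
    using infinite_Inter_of_chain_blocks[OF assms(1,6,7,8) D] unfolding F_def by blast
  ultimately obtain Z where Z: "infinite Z" "\<forall>S\<in>F. finite (Z - S)"
    using countable_pseudo_int_of_small_sfip[OF assms(2) infinite_UNIV_block_codes] by blast
  define W where "W = Z \<inter> extending_blocks D (g \<beta>0)"
  have W_almost: "finite (W - S)" if "S \<in> F" for S
    using Z(2) that finite_subset[of "W - S" "Z - S"] by (auto simp: W_def)
  have "infinite W"
    using infinite_Int_if_almost_sub[OF Z(1)] Z(2) assms(6) by (auto simp: W_def F_def)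
  then have "sparse_S_A lam k A (seq_of_blocks W)"
    using sparse_S_A_seq_of_blocks[OF D(1) _ _ assms(7)[rule_format, OF assms(6)]] W_almost
    by (auto simp: W_def F_def)
  moreover have "le_star (g \<beta>) (seq_of_blocks W)" if "\<beta> \<in> K" for \<beta>
  proof -
    have "extending_blocks D (g \<beta>) \<in> F"
      using that by (simp add: F_def)
    then show ?thesis
      using le_star_seq_of_blocks W_almost by blast
  qed
  ultimately show thesis
    using that by blast
qed

lemma in_S_upper_bound:
  assumes "card_order lam" "less_frak_t lam" "\<forall>\<alpha>. in_S (g \<alpha>) \<and> sparse (g \<alpha>)"
    and "\<forall>\<alpha> \<beta>. (\<alpha>, \<beta>) \<in> lam \<longrightarrow> le_star (g \<alpha>) (g \<beta>)"
  obtains \<nu> where "in_S \<nu>" "\<forall>\<alpha>. le_star (g \<alpha>) \<nu>"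
proof -
  obtain D where D: "infinite D" "\<forall>\<alpha>. finite (D - sdom (g \<alpha>))"
    using exists_pseudo_int_of_sdoms[OF assms(2), of UNIV g] assms(3,4) card_order_Field[OF assms(1)]
    by auto
  have E_inf: "\<forall>\<alpha>\<in>UNIV. infinite (extending_blocks D (g \<alpha>))"
  proof
    fix \<alpha>
    have "infinite (tight_blocks D (g \<alpha>))"
      using infinite_tight_blocks[OF _ _ D(1)] D(2) assms(3) by blast
    then show "infinite (extending_blocks D (g \<alpha>))"
      using tight_blocks_subset finite_subset by blast
  qed
  have E_antimono: "\<forall>\<alpha>\<in>UNIV. \<forall>\<beta>\<in>UNIV. (\<alpha>, \<beta>) \<in> lam \<longrightarrow>
      finite (extending_blocks D (g \<beta>) - extending_blocks D (g \<alpha>))"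
    using extending_blocks_antimono assms(4) by blast
  obtain Z where Z: "infinite Z" "\<forall>\<alpha>\<in>UNIV. finite (Z - extending_blocks D (g \<alpha>))"
    using countable_pseudo_int_of_tower[OF assms(2) infinite_UNIV_block_codes _ E_inf E_antimono]
      card_order_Field[OF assms(1)] by blast
  define W where "W = Z \<inter> blocks D"
  have "infinite (Z \<inter> extending_blocks D (g \<alpha>))" for \<alpha>
    using infinite_Int_if_almost_sub[OF Z(1)] Z(2) by blast
  then have W: "W \<subseteq> blocks D" "infinite W"
    using extending_blocks_subset unfolding W_def by (blast, meson Int_mono finite_subset order_refl)
  have "in_S (seq_of_blocks W)"
    using in_S_seq_of_blocks[OF D(1) W] .
  moreover have "le_star (g \<alpha>) (seq_of_blocks W)" for \<alpha>
  proof -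
    have "W - extending_blocks D (g \<alpha>) \<subseteq> Z - extending_blocks D (g \<alpha>)"
      by (auto simp: W_def)
    then show ?thesis
      using le_star_seq_of_blocks finite_subset Z(2) by blast
  qed
  ultimately show thesis
    using that by blast
qed

section \<open>Successor steps\<close>

lemma fset_map_add: "fset (m1 ++ m2) = fset m2 \<union> (fset m1 - dom m2)"
  by (auto simp: fset_def map_add_def split: option.splits)

lemma exists_one_point_extension:
  assumes "in_S u" "infinite H"
  obtains e where "sdom e = sdom u" "in_S e" "\<forall>x\<in>sdom u. the (u x) \<subseteq>\<^sub>m the (e x)"
    "\<forall>x\<in>sdom u. \<exists>q\<in>H. fset (the (e x)) = insert q (fset (the (u x)))"
proof -
  have "\<exists>q. q \<in> H \<and> dom (the (u x)) \<subseteq> {..<q}" if x: "x \<in> sdom u" for x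
  proof -
    obtain k where "dom (the (u x)) = {x..<k}"
      using in_S_block[OF assms(1) x] by blast
    moreover obtain q where "q \<in> H" "k \<le> q"
      using assms(2) infinite_nat_iff_unbounded_le by blast
    ultimately show ?thesis
      by auto
  qed
  then obtain q where q: "\<forall>x\<in>sdom u. q x \<in> H \<and> dom (the (u x)) \<subseteq> {..<q x}"
    using bchoice by metis
  have q_gt: "x < q x" if x: "x \<in> sdom u" for x
    using in_S_start[OF assms(1) x] q x by blast
  \<comment> \<open>On its domain the block of \<open>u\<close> wins over the padding, which adds zeros and a one at \<open>q x\<close>.\<close>
  define pad where "pad x = (\<lambda>l. if x \<le> l \<and> l \<le> q x then Some (l = q x) else None)" for x
  define e where "e x = map_option (\<lambda>\<eta>. pad x ++ \<eta>) (u x)" for x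
  have sdom_e: "sdom e = sdom u"
    by (simp add: sdom_def e_def)
  have the_e: "the (e x) = pad x ++ the (u x)" if "x \<in> sdom u" for x
    using that by (auto simp: sdom_def e_def)
  have dom_e: "dom (the (e x)) = {x..<Suc (q x)}" if x: "x \<in> sdom u" for x
  proof -
    have "dom (the (u x)) \<subseteq> {x..} \<inter> {..<q x}"
      using in_S_dom_ge[OF assms(1) x] q x by blast
    also have "\<dots> \<subseteq> {x..<Suc (q x)}"
      by auto
    finally have "dom (the (u x)) \<subseteq> {x..<Suc (q x)}" .
    moreover have "dom (pad x) = {x..<Suc (q x)}"
      by (auto simp: pad_def dom_def)
    ultimately show ?thesis
      using the_e[OF x] by auto
  qed
  have "in_S e"
    unfolding in_S_def
  proof (intro conjI allI impI)
    show "infinite (sdom e)"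
      using assms(1) by (simp add: sdom_e in_S_def)
    fix x \<eta> assume "e x = Some \<eta>"
    then have "x \<in> sdom u" "\<eta> = the (e x)"
      by (auto simp: sdom_def e_def)
    moreover have "x < q x"
      using q_gt \<open>x \<in> sdom u\<close> .
    ultimately show "\<exists>k>x. dom \<eta> = {x..<k}"
      using dom_e by (intro exI[of _ "Suc (q x)"]) auto
  qed
  moreover have "\<forall>x\<in>sdom u. the (u x) \<subseteq>\<^sub>m the (e x)"
    using the_e map_le_map_add by simp
  moreover have "fset (the (e x)) = insert (q x) (fset (the (u x)))" if x: "x \<in> sdom u" for x
  proof -
    have "fset (pad x) - dom (the (u x)) = {q x}"
      using q x q_gt[OF x] in_S_dom_ge[OF assms(1) x] by (auto simp: pad_def fset_def)
    then show ?thesis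
      using the_e[OF x] by (auto simp: fset_map_add)
  qed
  ultimately show thesis
    using that sdom_e q by blast
qed

lemma in_S_A_one_point_extension:
  assumes "in_S_A lam k A u" "\<forall>i. strict_lt lam i k \<longrightarrow> finite (H - A i)"
    and "in_S e" "sdom e = sdom u"
    and "\<forall>x\<in>sdom u. \<exists>q\<in>H. fset (the (e x)) = insert q (fset (the (u x)))"
  shows "in_S_A lam k A e"
proof -
  have sset_e: "sset e \<subseteq> sset u \<union> H"
  proof
    fix l assume "l \<in> sset e"
    then obtain x where x: "x \<in> sdom u" "l \<in> fset (the (e x))"
      using assms(4) by (auto simp: sset_def)
    moreover obtain q where "q \<in> H" "fset (the (e x)) = insert q (fset (the (u x)))"
      using assms(5) x(1) by blast
    ultimately have "l = q \<or> l \<in> fset (the (u x))"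
      by simp
    then show "l \<in> sset u \<union> H"
      using x(1) \<open>q \<in> H\<close> unfolding sset_def by blast
  qed
  show ?thesis
    unfolding in_S_A_def almost_sub_def
  proof (intro conjI allI impI ballI)
    fix i assume "strict_lt lam i k"
    then have "finite ((sset u - A i) \<union> (H - A i))"
      using assms(1,2) by (simp add: in_S_A_def almost_sub_def)
    moreover have "sset e - A i \<subseteq> (sset u - A i) \<union> (H - A i)"
      using sset_e by blast
    ultimately show "finite (sset e - A i)"
      using finite_subset by blast
  next
    fix n assume "n \<in> sdom e"
    then obtain q where "fset (the (e n)) = insert q (fset (the (u n)))"
      using assms(4,5) by blast
    then show "fset (the (e n)) \<noteq> {}"
      by simp
  qed (rule assms(3))
qed

definition min_less :: "nat set \<Rightarrow> nat set \<Rightarrow> nat set \<Rightarrow> bool" where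
  "min_less s X Y \<longleftrightarrow> Min (s \<inter> X) < Min (s \<inter> Y)"

lemma sparse_restriction_with_constant_comparisons:
  assumes "in_S e" "finite \<X>" "finite \<Y>"
  obtains D where "D \<subseteq> sdom e" "infinite D" "sparse (e |` D)"
    "\<forall>n\<in>D. \<forall>m\<in>D. \<forall>X\<in>\<X>. \<forall>Y\<in>\<Y>.
       min_less (fset (the (e n))) X Y \<longleftrightarrow>
       min_less (fset (the (e m))) X Y"
proof -
  define sig where "sig n = {(X, Y) \<in> \<X> \<times> \<Y>. min_less (fset (the (e n))) X Y}"
    for n
  have "sig ` sdom e \<subseteq> Pow (\<X> \<times> \<Y>)"
    by (auto simp: sig_def)
  then have "finite (sig ` sdom e)"
    using assms(2,3) finite_subset by blast
  then obtain n0 where "infinite {n \<in> sdom e. sig n = sig n0}"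
    using pigeonhole_infinite assms(1) by (metis in_S_def)
  then obtain D where D: "D \<subseteq> {n \<in> sdom e. sig n = sig n0}" "infinite D" "sparse (e |` D)"
    using sparsify[OF assms(1)] by (metis (no_types, lifting) mem_Collect_eq subsetI)
  have "sig n = sig m" if "n \<in> D" "m \<in> D" for n m
    using D(1) that by auto
  then have "\<forall>n\<in>D. \<forall>m\<in>D. \<forall>X\<in>\<X>. \<forall>Y\<in>\<Y>.
       min_less (fset (the (e n))) X Y \<longleftrightarrow>
       min_less (fset (the (e m))) X Y"
    unfolding sig_def by (auto simp: set_eq_iff)
  then show thesis
    using that D by blast
qed

definition succ_conds ::
    "'l rel \<Rightarrow> 'l \<Rightarrow> ('l \<Rightarrow> nat set) \<Rightarrow> ('l \<Rightarrow> nat set) \<Rightarrow> ('l \<times> 'l \<Rightarrow> 'l) \<Rightarrow> 'l \<Rightarrow> seqS \<Rightarrow> bool"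
  where
  "succ_conds lam k A B pr \<gamma> e \<longleftrightarrow>
     (\<exists>N. \<forall>n\<in>sdom e. n \<ge> N \<longrightarrow> fset (the (e n)) \<inter> B \<gamma> \<noteq> {}) \<and>
     (\<forall>\<beta>1 \<beta>2 X Y. pr (\<beta>1, \<beta>2) = \<gamma> \<longrightarrow> X \<in> choices lam k A B \<beta>1 \<longrightarrow> Y \<in> choices lam k A B \<beta>2 \<longrightarrow>
        (\<forall>n\<in>sdom e. fset (the (e n)) \<inter> X \<noteq> {} \<and> fset (the (e n)) \<inter> Y \<noteq> {}) \<and>
        (\<forall>n\<in>sdom e. \<forall>m\<in>sdom e.
           min_less (fset (the (e n))) X Y \<longleftrightarrow>
           min_less (fset (the (e m))) X Y))"

lemma succ_condsI:
  assumes "inj pr" "pr (\<beta>1, \<beta>2) = \<gamma>"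
    and "H \<subseteq> B \<gamma>" "\<forall>X\<in>choices lam k A B \<beta>1 \<union> choices lam k A B \<beta>2. H \<subseteq> X"
    and "\<forall>n\<in>sdom e. fset (the (e n)) \<inter> H \<noteq> {}"
    and "\<forall>n\<in>sdom e. \<forall>m\<in>sdom e. \<forall>X\<in>choices lam k A B \<beta>1. \<forall>Y\<in>choices lam k A B \<beta>2.
           min_less (fset (the (e n))) X Y \<longleftrightarrow>
           min_less (fset (the (e m))) X Y"
  shows "succ_conds lam k A B pr \<gamma> e"
  unfolding succ_conds_def
proof (intro conjI allI impI)
  show "\<exists>N. \<forall>n\<in>sdom e. n \<ge> N \<longrightarrow> fset (the (e n)) \<inter> B \<gamma> \<noteq> {}"
    using assms(3,5) by blast
  fix b1 b2 X Y
  assume b: "pr (b1, b2) = \<gamma>" and X: "X \<in> choices lam k A B b1" and Y: "Y \<in> choices lam k A B b2"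
  have "(b1, b2) = (\<beta>1, \<beta>2)"
    using injD[OF assms(1)] b assms(2) by metis
  then have X': "X \<in> choices lam k A B \<beta>1" and Y': "Y \<in> choices lam k A B \<beta>2"
    using X Y by simp_all
  then have "H \<subseteq> X" "H \<subseteq> Y"
    using assms(4) by blast+
  then show "\<forall>n\<in>sdom e. fset (the (e n)) \<inter> X \<noteq> {} \<and> fset (the (e n)) \<inter> Y \<noteq> {}"
    using assms(5) by blast
  show "\<forall>n\<in>sdom e. \<forall>m\<in>sdom e.
           min_less (fset (the (e n))) X Y \<longleftrightarrow>
           min_less (fset (the (e m))) X Y"
    using assms(6) X' Y' by blast
qed

section \<open>The recursive construction\<close>

locale eta_construction =
  fixes lam :: "'l rel" and B A :: "'l \<Rightarrow> nat set" and k :: 'l and pr :: "'l \<times> 'l \<Rightarrow> 'l"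
  assumes lam_card: "card_order lam"
    and lam_p: "is_frak_p lam"
    and p_lt_t: "less_frak_t lam"
    and B_Int: "\<forall>X\<in>range B. \<forall>Y\<in>range B. X \<inter> Y \<in> range B"
    and k_reg: "regular_below lam k"
    and A_inf: "\<forall>i. strict_lt lam i k \<longrightarrow> infinite (A i)"
    and A_dec: "\<forall>i j. strict_lt lam i j \<and> strict_lt lam j k \<longrightarrow> almost_sub (A j) (A i)"
    and A_B: "\<forall>i \<alpha>. strict_lt lam i k \<longrightarrow> infinite (A i \<inter> B \<alpha>)"
    and pr_bij: "bij pr"
begin

lemma underS_k: "underS lam k = {i. strict_lt lam i k}"
  by (auto simp: underS_def strict_lt_def)

lemma below_k_nonempty: "\<exists>i0. strict_lt lam i0 k"
  using k_reg infinite_imp_nonempty by (fastforce simp: regular_below_def underS_k)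

lemma infinite_Field: "infinite (Field lam)"
  using k_reg infinite_super[OF subset_UNIV] card_order_Field[OF lam_card]
  unfolding regular_below_def by metis

lemma exists_pseudo_int_of_A_inside:
  assumes "\<forall>i. strict_lt lam i k \<longrightarrow> infinite (A i \<inter> C)"
  obtains P where "infinite P" "P \<subseteq> C" "\<forall>i. strict_lt lam i k \<longrightarrow> finite (P - A i)"
proof -
  have "finite (A j - A i)" if "strict_lt lam j k" "(i, j) \<in> lam" for i j
  proof (cases "i = j")
    case False
    then show ?thesis
      using A_dec that by (auto simp: strict_lt_def almost_sub_def)
  qed simp
  then show thesis
    using exists_pseudo_int_inside[OF p_lt_t _ _ _, of "{i. strict_lt lam i k}" _ A C] below_k_nonempty
      card_order_Field[OF lam_card] assms that by auto
qed

lemma exists_sparse_S_A: "\<exists>e. sparse_S_A lam k A e"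
proof -
  obtain P where P: "infinite P" "\<forall>i. strict_lt lam i k \<longrightarrow> finite (P - A i)"
    using exists_pseudo_int_of_A_inside[of UNIV] A_inf by auto
  define e :: seqS where "e x = (if x \<in> P then Some [x \<mapsto> True] else None)" for x
  have sdom_e: "sdom e = P"
    by (auto simp: sdom_def e_def)
  have "in_S e"
    unfolding in_S_def sdom_e using P(1)
    by (auto simp: e_def split: if_splits intro!: exI[of _ "Suc _"])
  moreover have "sset e = P"
    by (auto simp: sset_def sdom_e e_def fset_def)
  moreover have "sparse e"
    by (auto simp: sparse_def sdom_e e_def)
  moreover have "fset (the (e n)) \<noteq> {}" if "n \<in> sdom e" for n
    using that by (auto simp: sdom_e e_def fset_def)
  ultimately show ?thesis
    using P(2) by (auto simp: sparse_S_A_def in_S_A_def almost_sub_def)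
qed

lemma exists_hitting_set:
  obtains H where "infinite H" "H \<subseteq> B \<gamma>" "\<forall>X\<in>choices lam k A B \<beta>1 \<union> choices lam k A B \<beta>2. H \<subseteq> X"
    "\<forall>i. strict_lt lam i k \<longrightarrow> finite (H - A i)"
proof -
  obtain \<delta>1 where \<delta>1: "B \<delta>1 = B \<gamma> \<inter> B \<beta>1"
    using B_Int by (metis rangeE rangeI)
  obtain \<delta> where \<delta>: "B \<delta> = B \<delta>1 \<inter> B \<beta>2"
    using B_Int by (metis rangeE rangeI)
  obtain P where P: "infinite P" "P \<subseteq> B \<delta>" "\<forall>i. strict_lt lam i k \<longrightarrow> finite (P - A i)"
    using exists_pseudo_int_of_A_inside A_B by blast
  define \<X> where "\<X> = choices lam k A B \<beta>1 \<union> choices lam k A B \<beta>2"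
  have "finite \<X>"
    by (simp add: \<X>_def choices_def)
  moreover have "finite (P - X)" if "X \<in> \<X>" for X
  proof -
    have "X \<in> {B \<beta>1, B \<beta>2} \<or> (\<exists>\<beta>. strict_lt lam \<beta> k \<and> X = A \<beta>)"
      using that by (auto simp: \<X>_def choices_def split: if_splits)
    then show ?thesis
    proof (elim disjE exE conjE)
      assume "X \<in> {B \<beta>1, B \<beta>2}"
      then have "P - X \<subseteq> {}"
        using P(2) \<delta> \<delta>1 by auto
      then show ?thesis
        using finite_subset by blast
    qed (use P(3) in simp)
  qed
  ultimately have "infinite (P \<inter> \<Inter>\<X>)"
    using infinite_Int_Inter[OF P(1)] by blast
  moreover have "P \<inter> \<Inter>\<X> \<subseteq> B \<gamma>"
    using P(2) \<delta> \<delta>1 by blast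
  moreover have "\<forall>i. strict_lt lam i k \<longrightarrow> finite (P \<inter> \<Inter>\<X> - A i)"
    using P(3) finite_subset[of "P \<inter> \<Inter>\<X> - A i" "P - A i" for i] by blast
  ultimately show thesis
    using that[of "P \<inter> \<Inter>\<X>"] by (auto simp: \<X>_def)
qed

lemma exists_succ_extension:
  assumes u: "sparse_S_A lam k A u"
  obtains e where "sparse_S_A lam k A e" "le_star u e" "succ_conds lam k A B pr \<gamma> e"
proof -
  obtain \<beta>1 \<beta>2 where \<beta>: "pr (\<beta>1, \<beta>2) = \<gamma>"
    using surjD[OF bij_is_surj[OF pr_bij], of \<gamma>] by (metis surj_pair)
  let ?\<X> = "choices lam k A B \<beta>1" and ?\<Y> = "choices lam k A B \<beta>2"
  obtain H where H: "infinite H" "H \<subseteq> B \<gamma>" "\<forall>X\<in>?\<X> \<union> ?\<Y>. H \<subseteq> X"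
    "\<forall>i. strict_lt lam i k \<longrightarrow> finite (H - A i)"
    using exists_hitting_set .
  have u_S: "in_S u"
    using u by (simp add: sparse_S_A_def in_S_A_def)
  obtain e0 where e0: "sdom e0 = sdom u" "in_S e0" "\<forall>x\<in>sdom u. the (u x) \<subseteq>\<^sub>m the (e0 x)"
    "\<forall>x\<in>sdom u. \<exists>q\<in>H. fset (the (e0 x)) = insert q (fset (the (u x)))"
    by (rule exists_one_point_extension[OF u_S H(1)])
  have e0_S_A: "in_S_A lam k A e0"
    using in_S_A_one_point_extension[OF _ H(4) e0(2,1,4)] u by (simp add: sparse_S_A_def)
  have fin: "finite ?\<X>" "finite ?\<Y>"
    by (simp_all add: choices_def)
  obtain D where D: "D \<subseteq> sdom e0" "infinite D" "sparse (e0 |` D)"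
    "\<forall>n\<in>D. \<forall>m\<in>D. \<forall>X\<in>?\<X>. \<forall>Y\<in>?\<Y>.
       min_less (fset (the (e0 n))) X Y \<longleftrightarrow>
       min_less (fset (the (e0 m))) X Y"
    by (rule sparse_restriction_with_constant_comparisons[OF e0(2) fin])
  have "sdom e0 \<inter> D = D"
    using D(1) by blast
  then have "sparse_S_A lam k A (e0 |` D)"
    using in_S_A_restrict[OF e0_S_A] D(2,3) by (simp add: sparse_S_A_def)
  moreover have "le_star u e0"
    using e0(1,3) by (auto simp: le_star_def)
  then have "le_star u (e0 |` D)"
    using le_star_trans le_star_restrict by blast
  moreover have "succ_conds lam k A B pr \<gamma> (e0 |` D)"
  proof (rule succ_condsI[OF bij_is_inj[OF pr_bij] \<beta> H(2,3)])
    show "\<forall>n\<in>sdom (e0 |` D). fset (the ((e0 |` D) n)) \<inter> H \<noteq> {}"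
    proof
      fix n assume "n \<in> sdom (e0 |` D)"
      then have n: "n \<in> D" "n \<in> sdom u"
        using e0(1) D(1) by (auto simp: sdom_restrict)
      then obtain q where "q \<in> H" "fset (the (e0 n)) = insert q (fset (the (u n)))"
        using e0(4) by blast
      then show "fset (the ((e0 |` D) n)) \<inter> H \<noteq> {}"
        using n(1) by auto
    qed
    show "\<forall>n\<in>sdom (e0 |` D). \<forall>m\<in>sdom (e0 |` D). \<forall>X\<in>?\<X>. \<forall>Y\<in>?\<Y>.
       min_less (fset (the ((e0 |` D) n))) X Y \<longleftrightarrow>
       min_less (fset (the ((e0 |` D) m))) X Y"
      using D(4) by (simp add: sdom_restrict)
  qed
  ultimately show thesis
    using that by blast
qed

definition admissible :: "('l \<Rightarrow> seqS) \<Rightarrow> 'l \<Rightarrow> seqS \<Rightarrow> bool" where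
  "admissible eta \<alpha> e \<longleftrightarrow> sparse_S_A lam k A e \<and> (\<forall>\<beta>. strict_lt lam \<beta> \<alpha> \<longrightarrow> le_star (eta \<beta>) e) \<and>
     (\<forall>\<gamma>. is_succ lam \<gamma> \<alpha> \<longrightarrow> succ_conds lam k A B pr \<gamma> e)"

lemma admissible_le_star:
  assumes "\<And>\<beta>. strict_lt lam \<beta> \<alpha> \<Longrightarrow> admissible eta \<beta> (eta \<beta>)"
    and "strict_lt lam \<beta> \<alpha>" "strict_lt lam \<beta>' \<alpha>" "(\<beta>, \<beta>') \<in> lam"
  shows "le_star (eta \<beta>) (eta \<beta>')"
proof (cases "\<beta> = \<beta>'")
  case False
  then show ?thesis
    using assms(1)[OF assms(3)] assms(4) by (simp add: admissible_def strict_lt_def)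
qed (simp add: le_star_refl)

lemma exists_admissible:
  assumes "\<And>\<beta>. strict_lt lam \<beta> \<alpha> \<Longrightarrow> admissible eta \<beta> (eta \<beta>)"
  shows "\<exists>e. admissible eta \<alpha> e"
proof -
  let ?K = "{\<beta>. strict_lt lam \<beta> \<alpha>}"
  obtain u where u: "sparse_S_A lam k A u" "\<forall>\<beta>\<in>?K. le_star (eta \<beta>) u"
  proof (cases "?K = {}")
    case True
    then show thesis
      using that exists_sparse_S_A by blast
  next
    case False
    then obtain \<beta>0 where "\<beta>0 \<in> ?K"
      by blast
    moreover have "\<forall>\<beta>\<in>?K. sparse_S_A lam k A (eta \<beta>)"
      using assms by (simp add: admissible_def)
    ultimately show thesis
      using sparse_S_A_upper_bound[OF lam_card lam_p p_lt_t infinite_Field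
          card_of_strict_lower_ordLess[OF lam_card]] admissible_le_star[OF assms] that
      by blast
  qed
  show ?thesis
  proof (cases "\<exists>\<gamma>. is_succ lam \<gamma> \<alpha>")
    case True
    then obtain \<gamma> where \<gamma>: "is_succ lam \<gamma> \<alpha>"
      by blast
    obtain e where "sparse_S_A lam k A e" "le_star u e" "succ_conds lam k A B pr \<gamma> e"
      using exists_succ_extension[OF u(1)] .
    then have "admissible eta \<alpha> e"
      using u(2) le_star_trans is_succ_unique[OF lam_card _ \<gamma>]
      unfolding admissible_def by blast
    then show ?thesis
      by blast
  next
    case False
    then have "admissible eta \<alpha> u"
      using u unfolding admissible_def by blast
    then show ?thesis
      by blast
  qed
qed

lemma exists_admissible_tower: "\<exists>eta. \<forall>\<alpha>. admissible eta \<alpha> (eta \<alpha>)"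
proof (rule dependent_wf_choice[OF wo_rel.WF[OF card_order_wo_rel[OF lam_card]]])
  show "admissible f \<alpha> e = admissible g \<alpha> e"
    if "\<And>\<beta>. (\<beta>, \<alpha>) \<in> lam - Id \<Longrightarrow> f \<beta> = g \<beta>" for f g \<alpha> e
    using that by (simp add: admissible_def strict_lt_def)
  show "\<exists>e. admissible eta \<alpha> e"
    if "\<And>\<beta>. (\<beta>, \<alpha>) \<in> lam - Id \<Longrightarrow> admissible eta \<beta> (eta \<beta>)" for \<alpha> eta
    using exists_admissible that by (simp add: strict_lt_def)
qed

end

theorem lemma2p8:
  fixes lam :: "'l rel" and B A :: "'l \<Rightarrow> nat set" and k :: 'l
    and pr :: "'l \<times> 'l \<Rightarrow> 'l"
  assumes lam_card: "card_order lam"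
    and lam_p: "is_frak_p lam"
    and p_lt_t: "less_frak_t lam"
    and exB: "exemplifies_p lam (range B)"
    and k_lt: "k \<in> Field lam"
    and k_reg: "regular_below lam k"
    and A_inf: "\<forall>i. strict_lt lam i k \<longrightarrow> infinite (A i)"
    and A_dec: "\<forall>i j. strict_lt lam i j \<and> strict_lt lam j k \<longrightarrow> almost_sub (A j) (A i)"
    and A_B: "\<forall>i \<alpha>. strict_lt lam i k \<longrightarrow> infinite (A i \<inter> B \<alpha>)"
    and A_max: "\<forall>P. pseudo_int P (A ` {i. strict_lt lam i k}) \<longrightarrow> (\<exists>\<alpha>. finite (P \<inter> B \<alpha>))"
    and pr_bij: "bij pr"
    and pr_ge: "\<forall>a1 a2. (a1, pr (a1, a2)) \<in> lam \<and> (a2, pr (a1, a2)) \<in> lam"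
  shows "\<exists>(eta :: 'l \<Rightarrow> seqS) (eta_lam :: seqS).
     (\<forall>\<alpha>. in_S_A lam k A (eta \<alpha>)) \<and> in_S eta_lam \<and>
     (\<forall>\<alpha> \<beta>. (\<alpha>, \<beta>) \<in> lam \<longrightarrow> le_star (eta \<alpha>) (eta \<beta>)) \<and>
     (\<forall>\<alpha>. le_star (eta \<alpha>) eta_lam) \<and>
     (\<forall>\<alpha> \<alpha>'. is_succ lam \<alpha> \<alpha>' \<longrightarrow>
        (\<exists>N. \<forall>n\<in>sdom (eta \<alpha>'). n \<ge> N \<longrightarrow> fset (the (eta \<alpha>' n)) \<inter> B \<alpha> \<noteq> {})) \<and>
     (\<forall>\<beta> \<gamma> \<alpha>' X Y. is_succ lam (pr (\<beta>, \<gamma>)) \<alpha>' \<longrightarrow>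
        X \<in> choices lam k A B \<beta> \<longrightarrow> Y \<in> choices lam k A B \<gamma> \<longrightarrow>
        (\<forall>n\<in>sdom (eta \<alpha>'). fset (the (eta \<alpha>' n)) \<inter> X \<noteq> {} \<and> fset (the (eta \<alpha>' n)) \<inter> Y \<noteq> {}) \<and>
        (\<forall>n\<in>sdom (eta \<alpha>'). \<forall>m\<in>sdom (eta \<alpha>').
           (Min (fset (the (eta \<alpha>' n)) \<inter> X) < Min (fset (the (eta \<alpha>' n)) \<inter> Y)) \<longleftrightarrow>
           (Min (fset (the (eta \<alpha>' m)) \<inter> X) < Min (fset (the (eta \<alpha>' m)) \<inter> Y))))"
proof -
  \<comment> \<open>\<open>k_lt\<close> is automatic (\<open>Field lam = UNIV\<close>).\<close>
  interpret eta_construction lam B A k pr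
    using exB by unfold_locales (simp_all add: assms exemplifies_p_def)
  obtain eta where eta: "\<forall>\<alpha>. admissible eta \<alpha> (eta \<alpha>)"
    using exists_admissible_tower by blast
  have mono: "\<forall>\<alpha> \<beta>. (\<alpha>, \<beta>) \<in> lam \<longrightarrow> le_star (eta \<alpha>) (eta \<beta>)"
    using eta le_star_refl by (auto simp: admissible_def strict_lt_def)
  obtain \<nu> where "in_S \<nu>" "\<forall>\<alpha>. le_star (eta \<alpha>) \<nu>"
    using in_S_upper_bound[OF lam_card p_lt_t _ mono] eta
    by (auto simp: admissible_def sparse_S_A_def in_S_A_def)
  moreover have "\<forall>\<alpha>. in_S_A lam k A (eta \<alpha>)"
    using eta by (simp add: admissible_def sparse_S_A_def)
  moreover have "\<forall>\<gamma> \<alpha>'. is_succ lam \<gamma> \<alpha>' \<longrightarrow> succ_conds lam k A B pr \<gamma> (eta \<alpha>')"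
    using eta by (simp add: admissible_def)
  ultimately show ?thesis
    using mono unfolding succ_conds_def min_less_def by blast
qed

end
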